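(* Let $A$ be a nonempty finite set of $n$ alternatives and let $C$ be a choice rule on $A$ that is (capacity-constrained) lexicographic for a priority profile $(\succ_1,\dots,\succ_n)$. Let $A_1=A$ and, for $t\in\{2,\dots,n\}$, $A_t=A\setminus C(A,t-1)$. Then $C$ is lexicographic for another priority profile $(\succ'_1,\dots,\succ'_n)$ if and only if $\succ_1=\succ'_1$ and, for each $t\in\{1,\dots,n\}$, the restrictions of $\succ_t$ and $\succ'_t$ to $A_t$ coincide.
   Context: Let $\mathcal{A}$ be the set of all nonempty subsets of $A$. A choice rule is a map $C$ assigning to each $(S,q)\in\mathcal{A}\times\{1,\dots,n\}$ a nonempty set $C(S,q)\subseteq S$ with $|C(S,q)|\le q$. A priority ordering is a complete, transitive and antisymmetric binary relation on $A$; a priority profile is a list $(\succ_1,\dots,\succ_n)$ of $n$ priority orderings. $C$ is (capacity-constrained) lexicographic for $(\succ_1,\dots,\succ_n)$ if for every $(S,q)$, $C(S,q)$ is obtained by choosing the $\succ_1$-highest alternative in $S$, then the $\succ_2$-highest alternative among the remaining ones, and so on, until $q$ alternatives are chosen or no alternative is left. *)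

theory Defs
  imports Main
begin

text \<open>A priority ordering on A: a complete, transitive, antisymmetric relation on A.
  (x, y) \<in> r means "x has priority at least as high as y" (reflexive by completeness).\<close>
definition priority_ordering :: "'a set \<Rightarrow> 'a rel \<Rightarrow> bool" where
  "priority_ordering A r \<longleftrightarrow> r \<subseteq> A \<times> A
     \<and> (\<forall>x\<in>A. \<forall>y\<in>A. (x, y) \<in> r \<or> (y, x) \<in> r)
     \<and> (\<forall>x y z. (x, y) \<in> r \<longrightarrow> (y, z) \<in> r \<longrightarrow> (x, z) \<in> r)
     \<and> (\<forall>x y. (x, y) \<in> r \<longrightarrow> (y, x) \<in> r \<longrightarrow> x = y)"

definition priority_profile :: "'a set \<Rightarrow> nat \<Rightarrow> (nat \<Rightarrow> 'a rel) \<Rightarrow> bool" where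
  "priority_profile A n P \<longleftrightarrow> (\<forall>t\<in>{1..n}. priority_ordering A (P t))"

definition choice_rule :: "'a set \<Rightarrow> nat \<Rightarrow> ('a set \<Rightarrow> nat \<Rightarrow> 'a set) \<Rightarrow> bool" where
  "choice_rule A n C \<longleftrightarrow> (\<forall>S q. S \<subseteq> A \<and> S \<noteq> {} \<and> q \<in> {1..n} \<longrightarrow>
      C S q \<noteq> {} \<and> C S q \<subseteq> S \<and> card (C S q) \<le> q)"

definition top_of :: "'a rel \<Rightarrow> 'a set \<Rightarrow> 'a" where
  "top_of r R = (THE x. x \<in> R \<and> (\<forall>y\<in>R. (x, y) \<in> r))"

fun lex_sel :: "(nat \<Rightarrow> 'a rel) \<Rightarrow> 'a set \<Rightarrow> nat \<Rightarrow> 'a set" where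
  "lex_sel P S 0 = {}"
| "lex_sel P S (Suc k) =
     (if S - lex_sel P S k = {} then lex_sel P S k
      else insert (top_of (P (Suc k)) (S - lex_sel P S k)) (lex_sel P S k))"

definition lexicographic :: "'a set \<Rightarrow> nat \<Rightarrow> ('a set \<Rightarrow> nat \<Rightarrow> 'a set) \<Rightarrow> (nat \<Rightarrow> 'a rel) \<Rightarrow> bool" where
  "lexicographic A n C P \<longleftrightarrow> (\<forall>S q. S \<subseteq> A \<and> S \<noteq> {} \<and> q \<in> {1..n} \<longrightarrow> C S q = lex_sel P S q)"

definition restr :: "'a rel \<Rightarrow> 'a set \<Rightarrow> 'a rel" where
  "restr r B = r \<inter> (B \<times> B)"

end

theory Submission
  imports Defs
begin

text \<open>Write \<open>K\<^sub>k\<close> for the first \<open>k\<close> alternatives chosen from \<open>A\<close>. When choosing from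
  \<open>S \<subseteq> A\<close>, every alternative of \<open>S \<inter> K\<^sub>k\<close> is also chosen from \<open>S\<close> within the first \<open>k\<close>
  rounds, so round \<open>k + 1\<close> only ever compares alternatives of \<open>A - K\<^sub>k\<close>: the restriction of
  \<open>\<succ>\<^sub>k\<^sub>+\<^sub>1\<close> to \<open>A - K\<^sub>k\<close> is all that matters. Conversely, for \<open>x, y \<in> A - K\<^sub>k\<close> the menu
  \<open>K\<^sub>k \<union> {x, y}\<close> loses exactly \<open>K\<^sub>k\<close> in the first \<open>k\<close> rounds and then yields the
  \<open>\<succ>\<^sub>k\<^sub>+\<^sub>1\<close>-better of \<open>x\<close> and \<open>y\<close>, so \<open>C\<close> reveals that restriction.\<close>

lemma priority_orderingD:
  assumes "priority_ordering A r"
  shows priority_ordering_subset: "r \<subseteq> A \<times> A"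
    and priority_ordering_total: "x \<in> A \<Longrightarrow> y \<in> A \<Longrightarrow> (x, y) \<in> r \<or> (y, x) \<in> r"
    and priority_ordering_trans: "(x, y) \<in> r \<Longrightarrow> (y, z) \<in> r \<Longrightarrow> (x, z) \<in> r"
    and priority_ordering_antisym: "(x, y) \<in> r \<Longrightarrow> (y, x) \<in> r \<Longrightarrow> x = y"
  using assms unfolding priority_ordering_def by blast+

lemma priority_ordering_refl: "priority_ordering A r \<Longrightarrow> x \<in> A \<Longrightarrow> (x, x) \<in> r"
  using priority_ordering_total by fastforce

lemma restr_priority_ordering: "priority_ordering A r \<Longrightarrow> restr r A = r"
  unfolding restr_def using priority_ordering_subset by blast

lemma priority_profile_mono: "priority_profile A n P \<Longrightarrow> k \<le> n \<Longrightarrow> priority_profile A k P"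
  unfolding priority_profile_def by simp

lemma top_of_eq:
  assumes "priority_ordering A r" "x \<in> R" "\<forall>y\<in>R. (x, y) \<in> r"
  shows "top_of r R = x"
  unfolding top_of_def
  using assms priority_ordering_antisym[OF assms(1)] by (intro the_equality) blast+

lemma priority_ordering_has_top:
  assumes "priority_ordering A r" "finite R" "R \<noteq> {}" "R \<subseteq> A"
  shows "\<exists>x\<in>R. \<forall>y\<in>R. (x, y) \<in> r"
  using assms(2-4)
proof (induction R rule: finite_ne_induct)
  case (singleton a)
  then show ?case using priority_ordering_refl[OF assms(1)] by blast
next
  case (insert a R)
  then obtain x where x: "x \<in> R" "\<forall>y\<in>R. (x, y) \<in> r" by auto
  from insert.prems x have "(a, x) \<in> r \<or> (x, a) \<in> r"
    using priority_ordering_total[OF assms(1)] by blast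
  then show ?case
    using x insert.prems priority_ordering_refl[OF assms(1)] priority_ordering_trans[OF assms(1)]
    by blast
qed

lemma top_of_greatest:
  assumes "priority_ordering A r" "finite R" "R \<noteq> {}" "R \<subseteq> A"
  shows top_of_mem: "top_of r R \<in> R"
    and top_of_ge: "y \<in> R \<Longrightarrow> (top_of r R, y) \<in> r"
  using priority_ordering_has_top[OF assms] top_of_eq[OF assms(1)] by metis+

lemma top_of_subset_eq:
  assumes "priority_ordering A r" "finite R" "R \<noteq> {}" "R \<subseteq> A"
    and "R' \<subseteq> R" "top_of r R \<in> R'"
  shows "top_of r R' = top_of r R"
  using assms top_of_ge[OF assms(1-4)] by (intro top_of_eq[OF assms(1)]) blast+

lemma top_of_restr_cong:
  assumes "restr r B = restr r' B" "R \<subseteq> B"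
  shows "top_of r R = top_of r' R"
proof -
  have "(\<forall>y\<in>R. (x, y) \<in> r) \<longleftrightarrow> (\<forall>y\<in>R. (x, y) \<in> r')" if "x \<in> R" for x
    using assms that unfolding restr_def by blast
  then show ?thesis unfolding top_of_def by metis
qed

lemma priority_profile_Suc:
  "priority_profile A (Suc k) P \<longleftrightarrow> priority_profile A k P \<and> priority_ordering A (P (Suc k))"
  unfolding priority_profile_def Ball_def atLeastAtMost_iff by (auto simp: le_Suc_eq)

lemma lex_sel_subset_Suc: "lex_sel P S k \<subseteq> lex_sel P S (Suc k)"
  by auto

lemma lex_sel_subset:
  assumes "priority_profile A k P" "finite S" "S \<subseteq> A"
  shows "lex_sel P S k \<subseteq> S"
  using assms(1)
proof (induction k)
  case (Suc k)
  then have "lex_sel P S k \<subseteq> S" and po: "priority_ordering A (P (Suc k))"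
    by (simp_all add: priority_profile_Suc)
  moreover have "top_of (P (Suc k)) (S - lex_sel P S k) \<in> S - lex_sel P S k"
    if "S - lex_sel P S k \<noteq> {}"
    using top_of_mem[OF po _ that] assms(2,3) by blast
  ultimately show ?case by auto
qed simp

lemma lex_sel_inter_subset:
  assumes "priority_profile A k P" "finite A" "S \<subseteq> A"
  shows "S \<inter> lex_sel P A k \<subseteq> lex_sel P S k"
  using assms(1)
proof (induction k)
  case (Suc k)
  define K L where "K = lex_sel P A k" and "L = lex_sel P S k"
  have IH: "S \<inter> K \<subseteq> L" and po: "priority_ordering A (P (Suc k))"
    using Suc by (simp_all add: priority_profile_Suc K_def L_def)
  have "x \<in> lex_sel P S (Suc k)" if x: "x \<in> S" "x \<in> lex_sel P A (Suc k)" "x \<notin> K" "x \<notin> L" for x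
  proof -
    have ne: "A - K \<noteq> {}" and top: "top_of (P (Suc k)) (A - K) = x"
      using x by (simp_all add: K_def split: if_splits)
    have "S - L \<subseteq> A - K" using IH assms(3) by blast
    then have "top_of (P (Suc k)) (S - L) = x"
      using top_of_subset_eq[OF po _ ne, of "S - L"] top x assms(2) by simp
    then show ?thesis using x by (auto simp: L_def)
  qed
  then show ?case using IH lex_sel_subset_Suc[of P S k] unfolding K_def L_def by blast
qed simp

lemma lex_sel_eq_if_subset:
  assumes "priority_profile A k P" "finite A" "lex_sel P A k \<subseteq> S" "S \<subseteq> A"
  shows "lex_sel P S k = lex_sel P A k"
  using assms(1,3)
proof (induction k)
  case (Suc k)
  define K where "K = lex_sel P A k"
  have IH: "lex_sel P S k = K" and po: "priority_ordering A (P (Suc k))"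
    using Suc lex_sel_subset_Suc[of P A k] by (simp_all add: priority_profile_Suc K_def)
  show ?case
  proof (cases "A - K = {}")
    case True
    then have "S - K = {}" using assms(4) by blast
    then show ?thesis using True IH by (simp add: K_def)
  next
    case False
    have fin: "finite (A - K)" using assms(2) by simp
    define a where "a = top_of (P (Suc k)) (A - K)"
    have A_Suc: "lex_sel P A (Suc k) = insert a K"
      using False by (simp add: K_def a_def)
    then have "a \<in> S - K"
      using Suc.prems(2) top_of_mem[OF po fin False] unfolding a_def by blast
    moreover have "S - K \<subseteq> A - K" using assms(4) by blast
    ultimately have "top_of (P (Suc k)) (S - K) = a"
      using top_of_subset_eq[OF po fin False] unfolding a_def by blast
    then show ?thesis using \<open>a \<in> S - K\<close> IH A_Suc by auto
  qed
qed simp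

lemma lexicographicD:
  "lexicographic A n C P \<Longrightarrow> S \<subseteq> A \<Longrightarrow> S \<noteq> {} \<Longrightarrow> q \<in> {1..n} \<Longrightarrow> C S q = lex_sel P S q"
  unfolding lexicographic_def by blast

lemma lexicographic_lex_sel_eq:
  assumes "lexicographic A n C P" "lexicographic A n C P'" "S \<subseteq> A" "S \<noteq> {}" "k \<le> n"
  shows "lex_sel P S k = lex_sel P' S k"
proof (cases "k = 0")
  case False
  then have "k \<in> {1..n}" using assms(5) by simp
  then show ?thesis using lexicographicD[OF assms(1,3,4)] lexicographicD[OF assms(2,3,4)] by simp
qed simp

lemma lexicographic_restr_subset:
  assumes "finite A" "priority_profile A n P" "priority_profile A n P'"
    and "lexicographic A n C P" "lexicographic A n C P'" "k < n"
  shows "restr (P (Suc k)) (A - lex_sel P A k) \<subseteq> P' (Suc k)"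
proof (rule subrelI)
  fix x y assume "(x, y) \<in> restr (P (Suc k)) (A - lex_sel P A k)"
  then have xy: "(x, y) \<in> P (Suc k)" "x \<in> A - lex_sel P A k" "y \<in> A - lex_sel P A k"
    unfolding restr_def by auto
  define K where "K = lex_sel P A k"
  define S where "S = insert x (insert y K)"
  have "priority_profile A (Suc k) P" "priority_profile A (Suc k) P'"
    using priority_profile_mono[OF assms(2)] priority_profile_mono[OF assms(3)] assms(6) by simp_all
  then have prof: "priority_profile A k P" "priority_profile A k P'"
    and po: "priority_ordering A (P (Suc k))" and po': "priority_ordering A (P' (Suc k))"
    by (simp_all add: priority_profile_Suc)
  have "K \<subseteq> A" using lex_sel_subset[OF prof(1) assms(1) subset_refl] unfolding K_def .
  then have S: "S \<subseteq> A" "S \<noteq> {}" "K \<subseteq> S" "S - K = {x, y}"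
    using xy unfolding S_def K_def by auto
  have "A \<noteq> {}" using xy by blast
  then have "lex_sel P' A k = K"
    using lexicographic_lex_sel_eq[OF assms(4,5) subset_refl] assms(6) unfolding K_def by simp
  then have sel_S: "lex_sel P S k = K" "lex_sel P' S k = K"
    using lex_sel_eq_if_subset[OF prof(1) assms(1) _ S(1)] lex_sel_eq_if_subset[OF prof(2) assms(1) _ S(1)]
      S(3) unfolding K_def by auto
  have "top_of (P (Suc k)) {x, y} = x"
    using xy priority_ordering_refl[OF po] by (intro top_of_eq[OF po]) auto
  then have "lex_sel P S (Suc k) = insert x K"
    using sel_S(1) S(4) by simp
  moreover have "lex_sel P' S (Suc k) = insert (top_of (P' (Suc k)) {x, y}) K"
    using sel_S(2) S(4) by simp
  moreover have "lex_sel P S (Suc k) = lex_sel P' S (Suc k)"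
    using lexicographic_lex_sel_eq[OF assms(4,5) S(1,2), of "Suc k"] assms(6) by simp
  ultimately have "x \<in> insert (top_of (P' (Suc k)) {x, y}) K"
    by (metis insertI1)
  moreover have "x \<notin> K" using xy unfolding K_def by blast
  ultimately have "top_of (P' (Suc k)) {x, y} = x" by simp
  then show "(x, y) \<in> P' (Suc k)"
    using top_of_ge[OF po', of "{x, y}" y] xy by auto
qed

lemma lexicographic_restr_eq:
  assumes "finite A" "A \<noteq> {}" "priority_profile A n P" "priority_profile A n P'"
    and "lexicographic A n C P" "lexicographic A n C P'" "k < n"
  shows "restr (P (Suc k)) (A - lex_sel P A k) = restr (P' (Suc k)) (A - lex_sel P A k)"
proof -
  have "lex_sel P' A k = lex_sel P A k"
    using lexicographic_lex_sel_eq[OF assms(5,6) subset_refl assms(2)] assms(7) by simp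
  then show ?thesis
    using lexicographic_restr_subset[OF assms(1,3,4,5,6,7)]
      lexicographic_restr_subset[OF assms(1,4,3,6,5,7)] unfolding restr_def by auto
qed

lemma restr_eq_imp_lex_sel_eq:
  assumes "finite A" "priority_profile A n P" "S \<subseteq> A" "k \<le> n"
    and "\<forall>j<n. restr (P (Suc j)) (A - lex_sel P A j) = restr (P' (Suc j)) (A - lex_sel P A j)"
  shows "lex_sel P S k = lex_sel P' S k"
  using assms(4)
proof (induction k)
  case (Suc k)
  have "S \<inter> lex_sel P A k \<subseteq> lex_sel P S k"
    using lex_sel_inter_subset[OF priority_profile_mono[OF assms(2)] assms(1,3)] Suc.prems by simp
  then have "S - lex_sel P S k \<subseteq> A - lex_sel P A k" using assms(3) by blast
  moreover have "restr (P (Suc k)) (A - lex_sel P A k) = restr (P' (Suc k)) (A - lex_sel P A k)"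
    using assms(5) Suc.prems by simp
  ultimately have "top_of (P (Suc k)) (S - lex_sel P S k) = top_of (P' (Suc k)) (S - lex_sel P S k)"
    by (rule top_of_restr_cong[rotated])
  moreover have "lex_sel P' S k = lex_sel P S k" using Suc by simp
  ultimately show ?case by simp
qed simp

lemma lexicographic_restr_iff:
  assumes "lexicographic A n C P" "A \<noteq> {}"
  shows "(\<forall>t\<in>{1..n}. let At = (if t = 1 then A else A - C A (t - 1))
                         in restr (P t) At = restr (P' t) At) \<longleftrightarrow>
    (\<forall>k<n. restr (P (Suc k)) (A - lex_sel P A k) = restr (P' (Suc k)) (A - lex_sel P A k))"
proof -
  have "C A k = lex_sel P A k" if "0 < k" "k < n" for k
    using lexicographicD[OF assms(1) subset_refl assms(2)] that by simp
  then show ?thesis unfolding image_Suc_lessThan[symmetric] by (auto simp: Let_def)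
qed

theorem proposition1:
  fixes A :: "'a set" and n :: nat and C :: "'a set \<Rightarrow> nat \<Rightarrow> 'a set"
    and P P' :: "nat \<Rightarrow> 'a rel"
  assumes "finite A" and "A \<noteq> {}" and "n = card A"
    and "choice_rule A n C"
    and "priority_profile A n P"
    and "lexicographic A n C P"
    and "priority_profile A n P'"
  shows "lexicographic A n C P' \<longleftrightarrow>
           (P 1 = P' 1 \<and>
            (\<forall>t\<in>{1..n}. let At = (if t = 1 then A else A - C A (t - 1))
                         in restr (P t) At = restr (P' t) At))"
proof -
  have "0 < n" using assms(1-3) by (simp add: card_gt_0_iff)
  let ?restr_eq = "\<forall>k<n. restr (P (Suc k)) (A - lex_sel P A k) = restr (P' (Suc k)) (A - lex_sel P A k)"
  note restr_iff = lexicographic_restr_iff[OF assms(6,2), of P']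
  show ?thesis unfolding restr_iff
  proof
    assume "lexicographic A n C P'"
    then have restr_eq: ?restr_eq
      using lexicographic_restr_eq assms by blast
    have "priority_ordering A (P 1)" "priority_ordering A (P' 1)"
      using assms(5,7) \<open>0 < n\<close> unfolding priority_profile_def by auto
    moreover have "restr (P 1) A = restr (P' 1) A"
      using restr_eq \<open>0 < n\<close> by (metis One_nat_def lex_sel.simps(1) Diff_empty)
    ultimately have "P 1 = P' 1" by (simp add: restr_priority_ordering)
    with restr_eq show "P 1 = P' 1 \<and> ?restr_eq" by blast
  next
    assume "P 1 = P' 1 \<and> ?restr_eq"
    then have "lex_sel P S q = lex_sel P' S q" if "S \<subseteq> A" "q \<le> n" for S q
      using restr_eq_imp_lex_sel_eq[OF assms(1,5) that] by blast
    then show "lexicographic A n C P'"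
      using lexicographicD[OF assms(6)] unfolding lexicographic_def by simp
  qed
qed

end
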